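(* Let $m\ge 2$, let $C_{n,m}$ be the number of comparisons made by Quickselect to find the $m$-th smallest element of a list of $n$ distinct numbers, and let $W_{n,m}=\frac{1}{n}C_{n,m}-1$. Let $D$ have the standard Dickman distribution. Then for all $n\ge m$, $$d_1(W_{n,m},D)\le \frac{(46m+8)\log(n/m)+54m+8}{n}.$$
   Context: Quickselect (to find the $m$-th smallest element of a list of $n\ge m$ distinct numbers): a pivot is chosen uniformly at random from the list and compared with each of the other $n-1$ elements; the elements smaller than the pivot form the left sublist and those larger form the right sublist. If the left sublist has size $m-1$, the pivot is the answer and the procedure stops; if it has size $\ge m$, the procedure recurses on the left sublist to find its $m$-th smallest element; otherwise (left size $L<m-1$) it recurses on the right sublist to find its $(m-L-1)$-th smallest element. All pivot choices are independent. $C_{n,m}$ denotes the total number of comparisons made. The standard Dickman distribution is the unique law of a non-negative random variable $D$ satisfying $D=_d U(D+1)$, where $U\sim\mathcal U[0,1]$ is independent of $D$. The Wasserstein distance is $d_1(X,Y)=\sup_{h\in \mathrm{Lip}_1}|Eh(X)-Eh(Y)|$, where $\mathrm{Lip}_1=\{h:|h(y)-h(x)|\le|y-x|\}$. *)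

theory Defs
  imports "HOL-Probability.Probability"
begin

text \<open>Distribution of the number of comparisons C(n,m) made by Quickselect to find the
m-th smallest of n distinct numbers. The pivot has rank k, uniform on {1..n};
the left sublist has size L = k-1.  Meaningful for 1 <= m <= n.\<close>

function qs_comparisons :: "nat \<Rightarrow> nat \<Rightarrow> nat pmf" where
  "qs_comparisons n m =
     (if n = 0 then return_pmf 0
      else bind_pmf (pmf_of_set {1..n}) (\<lambda>k.
        if k = m then return_pmf (n - 1)
        else if m < k then map_pmf (\<lambda>c. (n - 1) + c) (qs_comparisons (k - 1) m)
        else map_pmf (\<lambda>c. (n - 1) + c) (qs_comparisons (n - k) (m - k))))"
  by pat_completeness auto
termination
  by (relation "Wellfounded.measure fst") auto

definition dickman_law :: "real measure \<Rightarrow> bool" where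
  "dickman_law \<mu> \<longleftrightarrow> prob_space \<mu> \<and> sets \<mu> = sets borel \<and> (AE x in \<mu>. 0 \<le> x) \<and>
     \<mu> = distr (uniform_measure lborel {0..1} \<Otimes>\<^sub>M \<mu>) borel (\<lambda>(u, d). u * (d + 1))"

definition wasserstein1 :: "real measure \<Rightarrow> real measure \<Rightarrow> ereal" where
  "wasserstein1 M N =
     (SUP h \<in> {h :: real \<Rightarrow> real. 1-lipschitz_on UNIV h}.
        ereal \<bar>(\<integral>x. h x \<partial>M) - (\<integral>x. h x \<partial>N)\<bar>)"

end

theory Submission
  imports Defs
begin

text \<open>For a 1-Lipschitz test function \<open>h\<close> put \<open>g(u) = E h(u (D + 1))\<close> (\<open>dickman_avg\<close>).
The fixed-point equation of the Dickman law gives \<open>E h(D) = \<integral>\<^sub>0\<^sup>1 g\<close>, and \<open>g\<close> is 2-Lipschitz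
because \<open>E |D| \<le> 1\<close>. Conditioning Quickselect on the rank \<open>k\<close> of the first pivot, \<open>W\<^sub>n\<^sub>,\<^sub>m\<close> is,
up to a shift by \<open>-1/n\<close>, a copy of \<open>W\<close> for a smaller instance rescaled by its relative size
\<open>j/n\<close>; hence by induction on \<open>n\<close> (for all Lipschitz \<open>h\<close> at once) \<open>E h(W\<^sub>n\<^sub>,\<^sub>m)\<close> is close to the
Riemann sum \<open>(1/n) \<Sigma>\<^sub>k g((k-1)/n)\<close>, which is within \<open>2/n\<close> of \<open>\<integral>\<^sub>0\<^sup>1 g\<close>. The pivots \<open>k < m\<close>
only give the cruder comparison with \<open>g((n-k)/n)\<close>, but there are fewer than \<open>m\<close> of them;
summing the inductive errors yields the logarithmic bound.\<close>

abbreviation unit_uniform :: "real measure" where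
  "unit_uniform \<equiv> uniform_measure lborel {0..1}"

lemma prob_space_unit_uniform: "prob_space unit_uniform"
  by (rule prob_space_uniform_measure) auto

lemma AE_unit_uniform: "AE u in unit_uniform. 0 \<le> u \<and> u \<le> 1"
  by (rule AE_uniform_measureI) auto

lemma unit_uniform_integral_continuous:
  fixes f :: "real \<Rightarrow> real"
  assumes "continuous_on UNIV f"
  shows "integrable unit_uniform f" "integral\<^sup>L unit_uniform f = integral {0..1} f"
proof -
  have density: "unit_uniform = density lborel (\<lambda>x. ennreal (indicator {0..1::real} x))"
    unfolding uniform_measure_def by (intro density_cong) (auto split: split_indicator)
  have f_meas: "f \<in> borel_measurable lborel"
    using assms by (simp add: borel_measurable_continuous_onI)
  have f_int: "set_integrable lborel {0..1} f"
    by (rule borel_integrable_atLeastAtMost') (rule continuous_on_subset[OF assms], simp)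
  show "integrable unit_uniform f"
    unfolding density using f_int f_meas
    by (subst integrable_density) (auto simp: set_integrable_def)
  have "integral\<^sup>L unit_uniform f = (LINT x:{0..1}|lborel. f x)"
    unfolding density using f_meas
    by (subst integral_density) (auto simp: set_lebesgue_integral_def)
  also have "\<dots> = integral {0..1} f"
    by (rule set_borel_integral_eq_integral(2)[OF f_int])
  finally show "integral\<^sup>L unit_uniform f = integral {0..1} f" .
qed

lemma unit_uniform_integral_id:
  "integrable unit_uniform (\<lambda>x. x)" "integral\<^sup>L unit_uniform (\<lambda>x. x) = 1/2"
proof -
  have "continuous_on UNIV (\<lambda>x::real. x)" by (intro continuous_intros)
  moreover have "integral {0..1::real} (\<lambda>x. x) = 1/2"
    using integral_power[of 1 0 1] by simp
  ultimately show "integrable unit_uniform (\<lambda>x. x)" "integral\<^sup>L unit_uniform (\<lambda>x. x) = 1/2"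
    using unit_uniform_integral_continuous by auto
qed

subsection \<open>The first absolute moment of the Dickman law\<close>

lemma dickman_lawD:
  assumes "dickman_law \<mu>"
  shows "prob_space \<mu>" "sets \<mu> = sets borel" "AE x in \<mu>. 0 \<le> x"
    "\<mu> = distr (unit_uniform \<Otimes>\<^sub>M \<mu>) borel (\<lambda>(u, d). u * (d + 1))"
  using assms unfolding dickman_law_def by auto

lemma dickman_measurable:
  assumes "dickman_law \<mu>" "f \<in> borel_measurable borel"
  shows "f \<in> borel_measurable \<mu>"
  using assms dickman_lawD(2)[OF assms(1)] by (simp cong: measurable_cong_sets)

lemma dickman_integral_unfold:
  fixes h :: "real \<Rightarrow> real"
  assumes D: "dickman_law \<mu>" and h_int: "integrable \<mu> h"
  shows "integral\<^sup>L \<mu> h = (\<integral>u. (\<integral>d. h (u * (d + 1)) \<partial>\<mu>) \<partial>unit_uniform)"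
    "integral\<^sup>L \<mu> h = (\<integral>d. (\<integral>u. h (u * (d + 1)) \<partial>unit_uniform) \<partial>\<mu>)"
    "integrable \<mu> (\<lambda>d. \<integral>u. h (u * (d + 1)) \<partial>unit_uniform)"
proof -
  note law = dickman_lawD[OF D]
  interpret P: prob_space \<mu> by (rule law(1))
  interpret U: prob_space unit_uniform by (rule prob_space_unit_uniform)
  interpret pair_sigma_finite unit_uniform \<mu> ..
  let ?\<phi> = "\<lambda>(u, d). u * (d + 1) :: real"
  have h_meas: "h \<in> borel_measurable borel"
    using borel_measurable_integrable[OF h_int] law(2) by (simp cong: measurable_cong_sets)
  have \<phi>_meas: "?\<phi> \<in> borel_measurable (unit_uniform \<Otimes>\<^sub>M \<mu>)"
  proof -
    have "?\<phi> \<in> borel_measurable (borel \<Otimes>\<^sub>M borel)" by measurable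
    moreover have "sets (unit_uniform \<Otimes>\<^sub>M \<mu>) = sets (borel \<Otimes>\<^sub>M borel)"
      using law(2) by (intro sets_pair_measure_cong) auto
    ultimately show ?thesis by (simp cong: measurable_cong_sets)
  qed
  have "integrable (distr (unit_uniform \<Otimes>\<^sub>M \<mu>) borel ?\<phi>) h"
    using h_int law(4) by metis
  then have pair_int: "integrable (unit_uniform \<Otimes>\<^sub>M \<mu>) (\<lambda>(u, d). h (u * (d + 1)))"
    using integrable_distr_eq[OF \<phi>_meas h_meas] by (simp add: case_prod_beta')
  have pair_eq: "integral\<^sup>L \<mu> h = integral\<^sup>L (unit_uniform \<Otimes>\<^sub>M \<mu>) (\<lambda>(u, d). h (u * (d + 1)))"
    using \<phi>_meas h_meas by (subst law(4)) (simp add: integral_distr case_prod_beta')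
  show "integral\<^sup>L \<mu> h = (\<integral>u. (\<integral>d. h (u * (d + 1)) \<partial>\<mu>) \<partial>unit_uniform)"
    using pair_eq integral_fst[OF pair_int] by simp
  show "integral\<^sup>L \<mu> h = (\<integral>d. (\<integral>u. h (u * (d + 1)) \<partial>unit_uniform) \<partial>\<mu>)"
    using pair_eq integral_snd[OF pair_int] by simp
  show "integrable \<mu> (\<lambda>d. \<integral>u. h (u * (d + 1)) \<partial>unit_uniform)"
    using integrable_snd[OF pair_int] by simp
qed

lemma dickman_truncated_abs_integrable:
  assumes D: "dickman_law \<mu>" and "0 \<le> M"
  shows "integrable \<mu> (\<lambda>x. min \<bar>x\<bar> M)"
proof -
  interpret P: prob_space \<mu> by (rule dickman_lawD(1)[OF D])
  show ?thesis
    by (rule P.integrable_const_bound[where B=M]) (auto simp: assms intro!: dickman_measurable[OF D])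
qed

text \<open>Integrability of the Dickman law is not part of its definition, so the fixed-point equation
is first applied to the truncations \<open>min |x| M\<close>.\<close>

lemma dickman_truncated_abs_doubling:
  assumes D: "dickman_law \<mu>" and M: "0 \<le> M"
  shows "(\<integral>x. min \<bar>x\<bar> M \<partial>\<mu>) \<le> (1 + (\<integral>x. min \<bar>x\<bar> (2 * M) \<partial>\<mu>)) / 2"
proof -
  interpret P: prob_space \<mu> by (rule dickman_lawD(1)[OF D])
  interpret U: prob_space unit_uniform by (rule prob_space_unit_uniform)
  note unfold = dickman_integral_unfold[OF D dickman_truncated_abs_integrable[OF D M]]
  have inner: "AE d in \<mu>. (\<integral>u. min \<bar>u * (d + 1)\<bar> M \<partial>unit_uniform) \<le> (1 + min \<bar>d\<bar> (2 * M)) / 2"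
    using dickman_lawD(3)[OF D]
  proof eventually_elim
    case (elim d)
    have int: "integrable unit_uniform (\<lambda>u. min \<bar>u * (d + 1)\<bar> M)"
      by (rule U.integrable_const_bound[where B=M]) (auto simp: M)
    have "(\<integral>u. min \<bar>u * (d + 1)\<bar> M \<partial>unit_uniform) \<le> (\<integral>u. u * (d + 1) \<partial>unit_uniform)"
      using AE_unit_uniform elim
      by (intro integral_mono_AE int) (auto simp: unit_uniform_integral_id elim: eventually_mono)
    then have "(\<integral>u. min \<bar>u * (d + 1)\<bar> M \<partial>unit_uniform) \<le> (d + 1) / 2"
      using unit_uniform_integral_id by simp
    moreover have "(\<integral>u. min \<bar>u * (d + 1)\<bar> M \<partial>unit_uniform) \<le> M"
      using integral_mono[OF int, of "\<lambda>_. M"] by simp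
    ultimately show ?case using elim by (auto simp: min_def split: if_splits)
  qed
  have "(\<integral>x. min \<bar>x\<bar> M \<partial>\<mu>) = (\<integral>d. (\<integral>u. min \<bar>u * (d + 1)\<bar> M \<partial>unit_uniform) \<partial>\<mu>)"
    using unfold(2) by simp
  also have "\<dots> \<le> (\<integral>d. (1 + min \<bar>d\<bar> (2 * M)) / 2 \<partial>\<mu>)"
    using inner dickman_truncated_abs_integrable[OF D, of "2 * M"] M
    by (intro integral_mono_AE unfold(3)) auto
  also have "\<dots> = (1 + (\<integral>x. min \<bar>x\<bar> (2 * M) \<partial>\<mu>)) / 2"
    using dickman_truncated_abs_integrable[OF D, of "2 * M"] M by (simp add: P.prob_space)
  finally show ?thesis .
qed

lemma truncated_abs_integral_scaled_tendsto_0: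
  fixes \<mu> :: "real measure"
  assumes P: "prob_space \<mu>" and sets: "sets \<mu> = sets borel" and M: "0 < M"
  shows "(\<lambda>k. (\<integral>x. min \<bar>x\<bar> (2^k * M) \<partial>\<mu>) / 2^k) \<longlonglongrightarrow> 0"
proof -
  interpret P: prob_space \<mu> by (rule P)
  define s where "s k x = min (\<bar>x\<bar> / (2^k * M)) 1" for k x
  have eq: "(\<integral>x. min \<bar>x\<bar> (2^k * M) \<partial>\<mu>) / 2^k = M * (\<integral>x. s k x \<partial>\<mu>)" for k
  proof -
    have "(\<integral>x. min \<bar>x\<bar> (2^k * M) \<partial>\<mu>) = (\<integral>x. (2^k * M) * s k x \<partial>\<mu>)"
      unfolding s_def using M
      by (intro Bochner_Integration.integral_cong) (auto simp: min_def field_simps)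
    then show ?thesis by simp
  qed
  have "(\<lambda>k. \<integral>x. s k x \<partial>\<mu>) \<longlonglongrightarrow> (\<integral>x. 0 \<partial>\<mu>)"
  proof (rule integral_dominated_convergence[where w="\<lambda>_. 1"])
    show "s k \<in> borel_measurable \<mu>" for k
      unfolding s_def measurable_cong_sets[OF sets refl] by measurable
    show "AE x in \<mu>. norm (s k x) \<le> 1" for k
      using M by (intro AE_I2) (auto simp: s_def)
    show "AE x in \<mu>. (\<lambda>k. s k x) \<longlonglongrightarrow> 0"
    proof (rule AE_I2)
      fix x
      have "(\<lambda>k. \<bar>x\<bar> / M * (1/2)^k) \<longlonglongrightarrow> \<bar>x\<bar> / M * 0"
        by (intro tendsto_mult tendsto_const LIMSEQ_power_zero) auto
      then have "(\<lambda>k. min (\<bar>x\<bar> / (2^k * M)) 1) \<longlonglongrightarrow> min 0 1"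
        by (intro tendsto_min tendsto_const) (simp add: power_one_over mult.commute)
      then show "(\<lambda>k. s k x) \<longlonglongrightarrow> 0" by (simp add: s_def)
    qed
  qed auto
  then show ?thesis
    unfolding eq using tendsto_mult[OF tendsto_const[of M]] by fastforce
qed

lemma dickman_truncated_abs_le_1:
  assumes D: "dickman_law \<mu>" and M: "0 \<le> M"
  shows "(\<integral>x. min \<bar>x\<bar> M \<partial>\<mu>) \<le> 1"
proof (cases "M = 0")
  case False
  with M have M_pos: "0 < M" by simp
  define e where "e N = (\<integral>x. min \<bar>x\<bar> N \<partial>\<mu>)" for N
  have iterated: "e M - 1 \<le> (e (2^k * M) - 1) / 2^k" for k
  proof (induction k)
    case (Suc k)
    have "e (2^k * M) \<le> (1 + e (2 * (2^k * M))) / 2"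
      unfolding e_def by (rule dickman_truncated_abs_doubling[OF D]) (use M in simp)
    moreover have "e (2 * (2^k * M)) = e (2^Suc k * M)"
      by (simp add: mult.assoc)
    ultimately have "2 * (e (2^k * M) - 1) / 2^Suc k \<le> (e (2^Suc k * M) - 1) / 2^Suc k"
      by (intro divide_right_mono) auto
    moreover have "2 * (e (2^k * M) - 1) / 2^Suc k = (e (2^k * M) - 1) / 2^k"
      unfolding power_Suc by (rule nonzero_mult_divide_mult_cancel_left) simp
    ultimately show ?case using Suc by linarith
  qed simp
  have "e M - 1 \<le> e (2^k * M) / 2^k" for k
    by (rule order.trans[OF iterated[of k]]) (simp add: divide_right_mono)
  then have "e M - 1 \<le> 0"
    using truncated_abs_integral_scaled_tendsto_0[OF dickman_lawD(1,2)[OF D] M_pos]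
    unfolding e_def by (intro LIMSEQ_le_const) auto
  then show ?thesis by (simp add: e_def)
qed simp

lemma dickman_abs_integrable:
  assumes D: "dickman_law \<mu>"
  shows "integrable \<mu> abs" "(\<integral>x. \<bar>x\<bar> \<partial>\<mu>) \<le> 1"
proof -
  interpret P: prob_space \<mu> by (rule dickman_lawD(1)[OF D])
  define f where "f n x = min \<bar>x\<bar> (real n)" for n x
  have f_int: "integrable \<mu> (f n)" for n
    unfolding f_def by (rule dickman_truncated_abs_integrable[OF D]) simp
  have inc: "incseq (\<lambda>n. integral\<^sup>L \<mu> (f n))"
    unfolding incseq_def f_def using dickman_truncated_abs_integrable[OF D]
    by (auto intro!: integral_mono)
  have bdd: "bdd_above (range (\<lambda>n. integral\<^sup>L \<mu> (f n)))"
    unfolding f_def using dickman_truncated_abs_le_1[OF D] by (auto intro!: bdd_aboveI[where M=1])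
  have lim: "AE x in \<mu>. (\<lambda>n. f n x) \<longlonglongrightarrow> \<bar>x\<bar>"
  proof (rule AE_I2)
    fix x :: real
    have "eventually (\<lambda>n. f n x = \<bar>x\<bar>) sequentially"
      unfolding f_def using eventually_ge_at_top[of "nat \<lceil>\<bar>x\<bar>\<rceil>"]
      by eventually_elim (use real_nat_ceiling_ge[of "\<bar>x\<bar>"] in \<open>auto simp: min_def\<close>)
    then show "(\<lambda>n. f n x) \<longlonglongrightarrow> \<bar>x\<bar>" by (rule tendsto_eventually)
  qed
  have mono: "AE x in \<mu>. mono (\<lambda>n. f n x)"
    by (intro AE_I2 monoI) (auto simp: f_def intro: min.mono)
  have nonneg: "AE x in \<mu>. 0 \<le> f n x" for n
    by (simp add: f_def)
  have abs_meas: "abs \<in> borel_measurable \<mu>"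
    by (rule dickman_measurable[OF D]) simp
  note monotone_convergence = integral_monotone_convergence_nonneg
    [OF f_int mono nonneg lim LIMSEQ_incseq_SUP[OF bdd inc] abs_meas]
  show "integrable \<mu> abs" by (rule monotone_convergence(1))
  have "(SUP n. integral\<^sup>L \<mu> (f n)) \<le> 1"
    unfolding f_def using dickman_truncated_abs_le_1[OF D] by (intro cSUP_least) auto
  then show "(\<integral>x. \<bar>x\<bar> \<partial>\<mu>) \<le> 1" using monotone_convergence(2) by simp
qed

lemma lipschitz_on_UNIV_realD:
  fixes h :: "real \<Rightarrow> real"
  assumes "L-lipschitz_on UNIV h"
  shows "\<bar>h x - h y\<bar> \<le> L * \<bar>x - y\<bar>"
  using lipschitz_onD[OF assms, of x y] by (simp add: dist_real_def)

lemma lipschitz_on_borel_measurable: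
  fixes h :: "real \<Rightarrow> real"
  assumes "L-lipschitz_on UNIV h"
  shows "h \<in> borel_measurable borel"
  using assms by (intro borel_measurable_continuous_onI lipschitz_on_continuous_on)

lemma lipschitz_on_affine_precompose:
  fixes h :: "real \<Rightarrow> real"
  assumes h: "L-lipschitz_on UNIV h"
  shows "(L * \<bar>a\<bar>)-lipschitz_on UNIV (\<lambda>w. h (a * (w + 1) - c))"
proof (rule lipschitz_onI)
  show "0 \<le> L * \<bar>a\<bar>" using lipschitz_on_nonneg[OF h] by simp
  fix x y :: real
  have "\<bar>h (a * (x + 1) - c) - h (a * (y + 1) - c)\<bar> \<le> L * \<bar>(a * (x + 1) - c) - (a * (y + 1) - c)\<bar>"
    by (rule lipschitz_on_UNIV_realD[OF h])
  also have "\<bar>(a * (x + 1) - c) - (a * (y + 1) - c)\<bar> = \<bar>a\<bar> * \<bar>x - y\<bar>"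
    by (simp add: algebra_simps abs_mult[symmetric])
  finally show "dist (h (a * (x + 1) - c)) (h (a * (y + 1) - c)) \<le> L * \<bar>a\<bar> * dist x y"
    by (simp add: dist_real_def mult.assoc)
qed

lemma abs_integral_diff_le_integral:
  fixes f g B :: "'a \<Rightarrow> real"
  assumes "integrable M f" "integrable M g" "integrable M B" "\<And>x. \<bar>f x - g x\<bar> \<le> B x"
  shows "\<bar>(\<integral>x. f x \<partial>M) - (\<integral>x. g x \<partial>M)\<bar> \<le> (\<integral>x. B x \<partial>M)"
proof -
  have "\<bar>(\<integral>x. f x \<partial>M) - (\<integral>x. g x \<partial>M)\<bar> = \<bar>\<integral>x. f x - g x \<partial>M\<bar>"
    using assms by simp
  also have "\<dots> \<le> (\<integral>x. \<bar>f x - g x\<bar> \<partial>M)"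
    by (rule integral_abs_bound)
  also have "\<dots> \<le> (\<integral>x. B x \<partial>M)"
    using assms by (intro integral_mono) auto
  finally show ?thesis .
qed

lemma dickman_integrable_lipschitz:
  fixes h :: "real \<Rightarrow> real"
  assumes D: "dickman_law \<mu>" and h: "L-lipschitz_on UNIV h"
  shows "integrable \<mu> (\<lambda>x. h (\<alpha> * x + \<beta>))"
proof (rule Bochner_Integration.integrable_bound)
  interpret P: prob_space \<mu> by (rule dickman_lawD(1)[OF D])
  show "integrable \<mu> (\<lambda>x. \<bar>h \<beta>\<bar> + L * \<bar>\<alpha>\<bar> * \<bar>x\<bar>)"
    using dickman_abs_integrable(1)[OF D] by (intro Bochner_Integration.integrable_add) auto
  show "(\<lambda>x. h (\<alpha> * x + \<beta>)) \<in> borel_measurable \<mu>"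
    by (rule dickman_measurable[OF D], rule measurable_compose[OF _ lipschitz_on_borel_measurable[OF h]])
      simp
  show "AE x in \<mu>. norm (h (\<alpha> * x + \<beta>)) \<le> norm (\<bar>h \<beta>\<bar> + L * \<bar>\<alpha>\<bar> * \<bar>x\<bar>)"
  proof (rule AE_I2)
    fix x
    have "\<bar>h (\<alpha> * x + \<beta>) - h \<beta>\<bar> \<le> L * \<bar>(\<alpha> * x + \<beta>) - \<beta>\<bar>"
      by (rule lipschitz_on_UNIV_realD[OF h])
    then show "norm (h (\<alpha> * x + \<beta>)) \<le> norm (\<bar>h \<beta>\<bar> + L * \<bar>\<alpha>\<bar> * \<bar>x\<bar>)"
      using lipschitz_on_nonneg[OF h] by (simp add: abs_mult mult.assoc)
  qed
qed

definition dickman_avg :: "real measure \<Rightarrow> (real \<Rightarrow> real) \<Rightarrow> real \<Rightarrow> real" where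
  "dickman_avg \<mu> h u = (\<integral>d. h (u * (d + 1)) \<partial>\<mu>)"

lemma dickman_avg_0:
  assumes "dickman_law \<mu>"
  shows "dickman_avg \<mu> h 0 = h 0"
  using prob_space.prob_space[OF dickman_lawD(1)[OF assms]] by (simp add: dickman_avg_def)

lemma dickman_avg_lipschitz:
  fixes h :: "real \<Rightarrow> real"
  assumes D: "dickman_law \<mu>" and h: "L-lipschitz_on UNIV h"
  shows "(2 * L)-lipschitz_on UNIV (dickman_avg \<mu> h)"
proof (rule lipschitz_onI)
  interpret P: prob_space \<mu> by (rule dickman_lawD(1)[OF D])
  have L: "0 \<le> L" by (rule lipschitz_on_nonneg[OF h])
  then show "0 \<le> 2 * L" by simp
  fix u v :: real
  have int: "integrable \<mu> (\<lambda>d. h (u * (d + 1)))" for u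
    using dickman_integrable_lipschitz[OF D h, of u u] by (simp add: algebra_simps)
  have "\<bar>dickman_avg \<mu> h u - dickman_avg \<mu> h v\<bar> \<le> (\<integral>d. L * \<bar>u - v\<bar> * (\<bar>d\<bar> + 1) \<partial>\<mu>)"
    unfolding dickman_avg_def
  proof (rule abs_integral_diff_le_integral[OF int int])
    show "integrable \<mu> (\<lambda>d. L * \<bar>u - v\<bar> * (\<bar>d\<bar> + 1))"
      using dickman_abs_integrable(1)[OF D] by (intro integrable_mult_right Bochner_Integration.integrable_add) auto
    fix d :: real
    have "\<bar>h (u * (d + 1)) - h (v * (d + 1))\<bar> \<le> L * (\<bar>u - v\<bar> * \<bar>d + 1\<bar>)"
      using lipschitz_on_UNIV_realD[OF h, of "u * (d + 1)" "v * (d + 1)"]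
      by (simp add: left_diff_distrib[symmetric] abs_mult)
    also have "\<dots> \<le> L * \<bar>u - v\<bar> * (\<bar>d\<bar> + 1)"
      using L by (simp add: mult.assoc mult_left_mono)
    finally show "\<bar>h (u * (d + 1)) - h (v * (d + 1))\<bar> \<le> L * \<bar>u - v\<bar> * (\<bar>d\<bar> + 1)" .
  qed
  also have "\<dots> = L * \<bar>u - v\<bar> * ((\<integral>d. \<bar>d\<bar> \<partial>\<mu>) + 1)"
    using dickman_abs_integrable(1)[OF D] by (simp add: P.prob_space)
  also have "\<dots> \<le> L * \<bar>u - v\<bar> * 2"
    using dickman_abs_integrable(2)[OF D] L by (intro mult_left_mono) auto
  finally show "dist (dickman_avg \<mu> h u) (dickman_avg \<mu> h v) \<le> 2 * L * dist u v"
    by (simp add: dist_real_def algebra_simps)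
qed

lemma dickman_avg_shift:
  fixes h :: "real \<Rightarrow> real"
  assumes D: "dickman_law \<mu>" and h: "L-lipschitz_on UNIV h"
  shows "\<bar>(\<integral>d. h (a * (d + 1) - c) \<partial>\<mu>) - dickman_avg \<mu> h a\<bar> \<le> L * \<bar>c\<bar>"
proof -
  interpret P: prob_space \<mu> by (rule dickman_lawD(1)[OF D])
  have "\<bar>(\<integral>d. h (a * (d + 1) - c) \<partial>\<mu>) - dickman_avg \<mu> h a\<bar> \<le> (\<integral>d. L * \<bar>c\<bar> \<partial>\<mu>)"
    unfolding dickman_avg_def
  proof (rule abs_integral_diff_le_integral)
    show "integrable \<mu> (\<lambda>d. h (a * (d + 1) - c))"
      using dickman_integrable_lipschitz[OF D h, of a "a - c"] by (simp add: algebra_simps)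
    show "integrable \<mu> (\<lambda>d. h (a * (d + 1)))"
      using dickman_integrable_lipschitz[OF D h, of a a] by (simp add: algebra_simps)
    show "\<bar>h (a * (d + 1) - c) - h (a * (d + 1))\<bar> \<le> L * \<bar>c\<bar>" for d
      using lipschitz_on_UNIV_realD[OF h, of "a * (d + 1) - c" "a * (d + 1)"] by simp
  qed simp
  then show ?thesis by (simp add: P.prob_space)
qed

lemma dickman_integral_eq_avg_integral:
  fixes h :: "real \<Rightarrow> real"
  assumes D: "dickman_law \<mu>" and h: "L-lipschitz_on UNIV h"
  shows "(\<integral>x. h x \<partial>\<mu>) = integral {0..1} (dickman_avg \<mu> h)"
proof -
  have "integrable \<mu> h" using dickman_integrable_lipschitz[OF D h, of 1 0] by simp
  then have "(\<integral>x. h x \<partial>\<mu>) = integral\<^sup>L unit_uniform (dickman_avg \<mu> h)"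
    unfolding dickman_avg_def by (rule dickman_integral_unfold(1)[OF D])
  also have "\<dots> = integral {0..1} (dickman_avg \<mu> h)"
    by (rule unit_uniform_integral_continuous(2)[OF lipschitz_on_continuous_on[OF dickman_avg_lipschitz[OF D h]]])
  finally show ?thesis .
qed

subsection \<open>Left Riemann sums of Lipschitz functions\<close>

lemma lipschitz_integral_left_endpoint_error:
  fixes g :: "real \<Rightarrow> real"
  assumes g: "K-lipschitz_on UNIV g" and lr: "l \<le> r"
  shows "\<bar>integral {l..r} g - (r - l) * g l\<bar> \<le> K * (r - l) * (r - l)"
proof -
  have cont: "continuous_on {l..r} (\<lambda>u. g u - g l)"
    using lipschitz_on_continuous_on[OF g] by (intro continuous_intros) (auto intro: continuous_on_subset)
  have "integral {l..r} (\<lambda>u. g u - g l) = integral {l..r} g - integral {l..r} (\<lambda>u. g l)"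
    using lipschitz_on_continuous_on[OF g]
    by (intro integral_diff integrable_continuous_interval) (auto intro: continuous_on_subset)
  then have eq: "integral {l..r} g - (r - l) * g l = integral {l..r} (\<lambda>u. g u - g l)"
    using lr by simp
  have "norm (integral {l..r} (\<lambda>u. g u - g l)) \<le> (K * (r - l)) * (r - l)"
  proof (rule Henstock_Kurzweil_Integration.integral_bound[OF lr cont])
    fix t assume t: "t \<in> {l..r}"
    have "\<bar>g t - g l\<bar> \<le> K * \<bar>t - l\<bar>" by (rule lipschitz_on_UNIV_realD[OF g])
    also have "\<dots> \<le> K * (r - l)" using t lipschitz_on_nonneg[OF g] by (intro mult_left_mono) auto
    finally show "norm (g t - g l) \<le> K * (r - l)" by simp
  qed
  then show ?thesis unfolding eq by simp
qed

lemma lipschitz_riemann_sum_error: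
  fixes g :: "real \<Rightarrow> real"
  assumes g: "K-lipschitz_on UNIV g" and n: "1 \<le> n"
  shows "\<bar>integral {0..1} g - (\<Sum>k\<in>{1..n}. g (real (k - 1) / real n)) / real n\<bar> \<le> K / real n"
proof -
  have n_pos: "0 < real n" using n by simp
  let ?x = "\<lambda>j. real j / real n"
  have partial: "\<bar>integral {0..?x j} g - (\<Sum>k\<in>{1..j}. g (?x (k - 1))) / real n\<bar>
      \<le> real j * K / (real n * real n)" for j
  proof (induction j)
    case (Suc j)
    have step: "?x (Suc j) - ?x j = 1 / real n"
      using n_pos by (simp add: field_simps)
    have split: "integral {0..?x j} g + integral {?x j..?x (Suc j)} g = integral {0..?x (Suc j)} g"
      using lipschitz_on_continuous_on[OF g] n_pos
      by (intro Henstock_Kurzweil_Integration.integral_combine integrable_continuous_interval)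
         (auto intro: continuous_on_subset simp: divide_right_mono)
    have piece: "\<bar>integral {?x j..?x (Suc j)} g - (1 / real n) * g (?x j)\<bar> \<le> K / (real n * real n)"
      using lipschitz_integral_left_endpoint_error[OF g, of "?x j" "?x (Suc j)"] n_pos
      unfolding step by (simp add: divide_right_mono)
    have "\<bar>integral {0..?x (Suc j)} g - (\<Sum>k\<in>{1..Suc j}. g (?x (k - 1))) / real n\<bar>
       = \<bar>(integral {0..?x j} g - (\<Sum>k\<in>{1..j}. g (?x (k - 1))) / real n)
          + (integral {?x j..?x (Suc j)} g - (1 / real n) * g (?x j))\<bar>"
      unfolding split[symmetric] by (simp add: add_divide_distrib algebra_simps)
    also have "\<dots> \<le> real j * K / (real n * real n) + K / (real n * real n)"
      using Suc.IH piece by (intro order.trans[OF abs_triangle_ineq] add_mono)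
    also have "\<dots> = real (Suc j) * K / (real n * real n)"
      by (simp add: add_divide_distrib algebra_simps)
    finally show ?case .
  qed simp
  show ?thesis
    using partial[of n] n_pos by simp
qed

definition qs_error_bound :: "nat \<Rightarrow> nat \<Rightarrow> real" where
  "qs_error_bound m n = (46 * real m + 8) * ln (real n / real m) + 54 * real m + 8"

text \<open>\<open>n\<close> times the error contributed by a pivot of rank \<open>k\<close>: the inductive error of the
subproblem plus \<open>1\<close> for the shift by \<open>-1/n\<close>; a pivot \<open>k < m\<close> costs \<open>2n\<close> more because the
subproblem is compared with \<open>dickman_avg\<close> at \<open>(n-k)/n\<close> instead of \<open>(k-1)/n\<close>.\<close>

definition qs_pivot_error_bound :: "nat \<Rightarrow> nat \<Rightarrow> nat \<Rightarrow> real" where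
  "qs_pivot_error_bound n m k =
     (if k = m then 2 * real m - 1
      else if m < k then qs_error_bound m (k - 1) + 1
      else qs_error_bound (m - k) (n - k) + 1 + 2 * real n)"

lemma sum_ln_ratio_le:
  assumes "1 \<le> m" "m \<le> n"
  shows "(\<Sum>i\<in>{m..<n}. ln (real i / real m)) \<le> real n * ln (real n / real m) - (real n - real m)"
  using assms(2)
proof (induction n rule: dec_induct)
  case (step n)
  have pos: "0 < real n" "0 < real m" using step assms by auto
  have "ln (real n / (1 + real n)) \<le> real n / (1 + real n) - 1"
    using pos by (intro ln_le_minus_one) simp
  then have "(1 + real n) * ln (real n / (1 + real n)) \<le> (1 + real n) * (real n / (1 + real n) - 1)"
    using pos by (intro mult_left_mono) auto
  also have "\<dots> = -1" using pos by (simp add: field_simps)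
  finally have key: "(1 + real n) * (ln (real n) - ln (1 + real n)) \<le> -1"
    using pos by (simp add: ln_div)
  have "(\<Sum>i\<in>{m..<Suc n}. ln (real i / real m))
      \<le> real n * ln (real n / real m) - (real n - real m) + ln (real n / real m)"
    using step by simp
  also have "\<dots> \<le> (1 + real n) * ln ((1 + real n) / real m) - ((1 + real n) - real m)"
    using key pos by (simp add: ln_div algebra_simps)
  finally show ?case by simp
qed simp

lemma sum_ln_ratio_inverse_le:
  assumes "1 \<le> m"
  shows "(\<Sum>j\<in>{1..<m}. ln (real m / real j)) \<le> real m - 1"
  using assms
proof (induction m rule: dec_induct)
  case (step m)
  have m_pos: "0 < real m" using step by simp
  define c where "c = ln (real (Suc m) / real m)"
  have "c \<le> real (Suc m) / real m - 1"
    unfolding c_def using m_pos by (intro ln_le_minus_one) simp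
  then have "real m * c \<le> 1"
    using m_pos by (simp add: field_simps)
  have "ln (real (Suc m) / real j) = ln (real m / real j) + c" if "j \<in> {1..<m}" for j
    using that m_pos unfolding c_def by (simp add: ln_div)
  then have "(\<Sum>j\<in>{1..<Suc m}. ln (real (Suc m) / real j))
      = (\<Sum>j\<in>{1..<m}. ln (real m / real j)) + real (m - 1) * c + c"
    using step by (simp add: sum.distrib c_def)
  also have "\<dots> = (\<Sum>j\<in>{1..<m}. ln (real m / real j)) + real m * c"
    using step by (simp add: of_nat_diff algebra_simps)
  finally show ?case using step.IH \<open>real m * c \<le> 1\<close> by simp
qed simp

lemma sum_reflect_atLeastLessThan:
  fixes f :: "nat \<Rightarrow> 'a::comm_monoid_add"
  shows "(\<Sum>k\<in>{1..<m}. f (m - k)) = (\<Sum>k\<in>{1..<m}. f k)"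
proof -
  have "(\<Sum>k\<in>{1..<m}. f k) = (\<Sum>k\<in>{1..<m}. f (m + 1 - Suc k))"
    by (rule sum.atLeastLessThan_rev)
  then show ?thesis by simp
qed

lemma sum_of_nat_atLeastLessThan: "(\<Sum>k\<in>{1..<m}. real k) = real m * (real m - 1) / 2"
proof (cases m)
  case (Suc m')
  then have "{1..<m} = {Suc 0..m'}" by auto
  then show ?thesis
    using double_gauss_sum_from_Suc_0[of m', where 'a=real] Suc by (simp add: field_simps)
qed simp

lemma qs_error_bound_left_subproblem:
  assumes "1 \<le> k" "k < m" "m \<le> n"
  shows "qs_error_bound (m - k) (n - k) \<le> ln (real n / real m) * (46 * real (m - k) + 8) + 46 * real k
          + 8 * ln (real m / real (m - k)) + 54 * real (m - k) + 8"
proof -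
  define j where "j = real (m - k)"
  have j: "1 \<le> j" "j = real m - real k" using assms unfolding j_def by (auto simp: of_nat_diff)
  have pos: "0 < real m" "0 < real n" "real (n - k) = real n - real k" "0 < real n - real k"
    using assms by (auto simp: of_nat_diff)
  have "ln ((real n - real k) / j) \<le> ln (real n / j)"
    using j pos by (intro ln_mono) (auto simp: divide_right_mono)
  also have "ln (real n / j) = ln (real n / real m) + ln (real m / j)"
    using pos j by (simp add: ln_div)
  finally have log_split: "ln ((real n - real k) / j) \<le> ln (real n / real m) + ln (real m / j)" .
  have "ln (real m / j) \<le> real m / j - 1"
    using pos j by (intro ln_le_minus_one) simp
  then have "j * ln (real m / j) \<le> j * (real m / j - 1)"
    using j by (intro mult_left_mono) auto
  then have entropy: "j * ln (real m / j) \<le> real k"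
    using j by (simp add: right_diff_distrib)
  have "qs_error_bound (m - k) (n - k) = (46 * j + 8) * ln ((real n - real k) / j) + 54 * j + 8"
    unfolding qs_error_bound_def j_def[symmetric] pos(3) ..
  also have "\<dots> \<le> (46 * j + 8) * (ln (real n / real m) + ln (real m / j)) + 54 * j + 8"
    using log_split j by (intro add_mono mult_left_mono) auto
  also have "\<dots> \<le> ln (real n / real m) * (46 * j + 8) + 46 * real k + 8 * ln (real m / j) + 54 * j + 8"
    using entropy by (simp add: algebra_simps)
  finally show ?thesis unfolding j_def .
qed

lemma sum_qs_pivot_error_bound_left:
  assumes m: "1 \<le> m" and mn: "m \<le> n"
  shows "(\<Sum>k\<in>{1..<m}. qs_pivot_error_bound n m k)
    \<le> (23 * real m + 8) * (real n - real m) + 50 * real m * (real m - 1) + 8 * (real m - 1)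
       + (real m - 1) * (9 + 2 * real n)"
proof -
  define Lg where "Lg = ln (real n / real m)"
  define S where "S = real m * (real m - 1) / 2"
  define T where "T = (\<Sum>k\<in>{1..<m}. ln (real m / real (m - k)))"
  have card: "real (card {1..<m}) = real m - 1" using m by (simp add: of_nat_diff)
  have "(\<Sum>k\<in>{1..<m}. qs_pivot_error_bound n m k)
     \<le> (\<Sum>k\<in>{1..<m}. Lg * 46 * real (m - k) + Lg * 8 + 46 * real k
          + 8 * ln (real m / real (m - k)) + 54 * real (m - k) + (9 + 2 * real n))"
    using qs_error_bound_left_subproblem mn unfolding qs_pivot_error_bound_def Lg_def
    by (intro sum_mono) (fastforce simp: algebra_simps)
  also have "\<dots> = Lg * 46 * (\<Sum>k\<in>{1..<m}. real (m - k)) + (real m - 1) * (Lg * 8)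
      + 46 * (\<Sum>k\<in>{1..<m}. real k) + 8 * T
      + 54 * (\<Sum>k\<in>{1..<m}. real (m - k)) + (real m - 1) * (9 + 2 * real n)"
    unfolding T_def
    by (simp only: sum.distrib sum_distrib_left[symmetric] sum_constant card) (simp add: algebra_simps)
  also have "\<dots> = Lg * ((real m - 1) * (23 * real m + 8)) + 50 * real m * (real m - 1) + 8 * T
      + (real m - 1) * (9 + 2 * real n)"
    unfolding sum_reflect_atLeastLessThan[of real] sum_of_nat_atLeastLessThan by (simp add: field_simps)
  also have "\<dots> \<le> (23 * real m + 8) * (real n - real m) + 50 * real m * (real m - 1) + 8 * (real m - 1)
      + (real m - 1) * (9 + 2 * real n)"
  proof -
    have "Lg \<le> real n / real m - 1"
      unfolding Lg_def using m mn by (intro ln_le_minus_one) simp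
    then have "real m * Lg \<le> real n - real m"
      using m by (simp add: field_simps)
    moreover have "0 \<le> Lg" unfolding Lg_def using m mn by simp
    ultimately have "(real m - 1) * Lg \<le> real n - real m"
      by (simp add: left_diff_distrib)
    then have "Lg * ((real m - 1) * (23 * real m + 8)) \<le> (real n - real m) * (23 * real m + 8)"
      by (metis mult.assoc mult.commute mult_right_mono add_nonneg_nonneg of_nat_0_le_iff
          mult_nonneg_nonneg zero_le_numeral)
    moreover have "T \<le> real m - 1"
      using sum_ln_ratio_inverse_le[OF m] sum_reflect_atLeastLessThan[of "\<lambda>j. ln (real m / real j)" m]
      unfolding T_def by simp
    ultimately show ?thesis by (simp add: algebra_simps)
  qed
  finally show ?thesis .
qed

lemma sum_qs_pivot_error_bound_right:
  assumes m: "1 \<le> m" and mn: "m \<le> n"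
  shows "(\<Sum>i\<in>{m..<n}. qs_pivot_error_bound n m (Suc i))
    \<le> (46 * real m + 8) * (real n * ln (real n / real m) - (real n - real m))
       + (54 * real m + 9) * (real n - real m)"
proof -
  have "(\<Sum>i\<in>{m..<n}. qs_pivot_error_bound n m (Suc i))
      = (\<Sum>i\<in>{m..<n}. (46 * real m + 8) * ln (real i / real m) + (54 * real m + 9))"
    by (intro sum.cong) (auto simp: qs_pivot_error_bound_def qs_error_bound_def)
  also have "\<dots> = (46 * real m + 8) * (\<Sum>i\<in>{m..<n}. ln (real i / real m)) + (54 * real m + 9) * (real n - real m)"
    using mn by (simp add: sum.distrib sum_distrib_left of_nat_diff)
  also have "\<dots> \<le> (46 * real m + 8) * (real n * ln (real n / real m) - (real n - real m))
       + (54 * real m + 9) * (real n - real m)"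
    using sum_ln_ratio_le[OF m mn] by (intro add_mono mult_left_mono) auto
  finally show ?thesis .
qed

lemma sum_qs_pivot_error_bound_le:
  assumes m: "1 \<le> m" and mn: "m \<le> n"
  shows "(\<Sum>k\<in>{1..n}. qs_pivot_error_bound n m k) + 2 * real n \<le> real n * qs_error_bound m n"
proof -
  let ?F = "qs_pivot_error_bound n m"
  have "(\<Sum>k\<in>{m..<Suc n}. ?F k) = ?F m + (\<Sum>k\<in>{Suc m..<Suc n}. ?F k)"
    using mn by (intro sum.atLeast_Suc_lessThan) auto
  also have "(\<Sum>k\<in>{Suc m..<Suc n}. ?F k) = (\<Sum>i\<in>{m..<n}. ?F (Suc i))"
    by (rule sum.shift_bounds_Suc_ivl)
  finally have "(\<Sum>k\<in>{m..<Suc n}. ?F k) = ?F m + (\<Sum>i\<in>{m..<n}. ?F (Suc i))" .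
  moreover have "(\<Sum>k\<in>{1..n}. ?F k) = (\<Sum>k\<in>{1..<m}. ?F k) + (\<Sum>k\<in>{m..<Suc n}. ?F k)"
    using m mn by (subst sum.atLeastLessThan_concat) (auto simp: atLeastLessThanSuc_atLeastAtMost)
  moreover have "?F m = 2 * real m - 1"
    by (simp add: qs_pivot_error_bound_def)
  moreover have "real m * real m \<le> real m * real n" "real n \<le> real m * real n"
    using m mn by (auto intro: mult_left_mono)
  ultimately show ?thesis
    using sum_qs_pivot_error_bound_left[OF m mn] sum_qs_pivot_error_bound_right[OF m mn]
    unfolding qs_error_bound_def by (simp add: algebra_simps)
qed

subsection \<open>Conditioning Quickselect on the first pivot\<close>

declare qs_comparisons.simps[simp del]

definition qs_given_pivot :: "nat \<Rightarrow> nat \<Rightarrow> nat \<Rightarrow> nat pmf" where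
  "qs_given_pivot n m k =
     (if k = m then return_pmf (n - 1)
      else if m < k then map_pmf (\<lambda>c. n - 1 + c) (qs_comparisons (k - 1) m)
      else map_pmf (\<lambda>c. n - 1 + c) (qs_comparisons (n - k) (m - k)))"

lemma qs_comparisons_unfold:
  "n \<noteq> 0 \<Longrightarrow> qs_comparisons n m = bind_pmf (pmf_of_set {1..n}) (qs_given_pivot n m)"
  by (subst qs_comparisons.simps) (simp add: qs_given_pivot_def[abs_def])

lemma finite_set_pmf_qs_comparisons: "finite (set_pmf (qs_comparisons n m))"
proof (induction n arbitrary: m rule: less_induct)
  case (less n)
  show ?case
  proof (cases "n = 0")
    case True
    then show ?thesis by (subst qs_comparisons.simps) simp
  next
    case False
    have "finite (set_pmf (qs_given_pivot n m k))" if "k \<in> {1..n}" for k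
      using that less.IH[of "k - 1" m] less.IH[of "n - k" "m - k"] by (auto simp: qs_given_pivot_def)
    then show ?thesis
      unfolding qs_comparisons_unfold[OF False] using False by (auto simp: set_bind_pmf)
  qed
qed

definition qs_W :: "nat \<Rightarrow> nat \<Rightarrow> real pmf" where
  "qs_W n m = map_pmf (\<lambda>c. real c / real n - 1) (qs_comparisons n m)"

lemma expectation_qs_W_pivot_average:
  assumes "1 \<le> n"
  shows "measure_pmf.expectation (qs_W n m) h
    = (\<Sum>k\<in>{1..n}. measure_pmf.expectation (qs_given_pivot n m k) (\<lambda>c. h (real c / real n - 1))) / real n"
proof -
  have n: "n \<noteq> 0" using assms by simp
  have "finite (set_pmf (qs_given_pivot n m k))" for k
    using finite_set_pmf_qs_comparisons by (auto simp: qs_given_pivot_def)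
  then have "measure_pmf.expectation (qs_comparisons n m) (\<lambda>c. h (real c / real n - 1))
      = (\<Sum>k\<in>{1..n}. pmf (pmf_of_set {1..n}) k
           *\<^sub>R measure_pmf.expectation (qs_given_pivot n m k) (\<lambda>c. h (real c / real n - 1)))"
    unfolding qs_comparisons_unfold[OF n] using n by (intro pmf_expectation_bind) auto
  also have "\<dots> = (\<Sum>k\<in>{1..n}. measure_pmf.expectation (qs_given_pivot n m k) (\<lambda>c. h (real c / real n - 1)))
      / real n"
    using n by (simp add: sum_divide_distrib)
  finally show ?thesis by (simp add: qs_W_def)
qed

lemma expectation_shifted_qs_comparisons:
  fixes h :: "real \<Rightarrow> real"
  assumes "1 \<le> n" "0 < j"
  shows "measure_pmf.expectation (map_pmf (\<lambda>c. n - 1 + c) (qs_comparisons j m)) (\<lambda>c. h (real c / real n - 1))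
    = measure_pmf.expectation (qs_W j m) (\<lambda>w. h (real j / real n * (w + 1) - 1 / real n))"
proof -
  have rescale: "real (n - 1 + c) / real n - 1 = real j / real n * ((real c / real j - 1) + 1) - 1 / real n"
    for c using assms by (simp add: of_nat_diff field_simps)
  have "measure_pmf.expectation (map_pmf (\<lambda>c. n - 1 + c) (qs_comparisons j m)) (\<lambda>c. h (real c / real n - 1))
      = measure_pmf.expectation (qs_comparisons j m) (\<lambda>c. h (real (n - 1 + c) / real n - 1))"
    by (rule integral_map_pmf)
  also have "\<dots> = measure_pmf.expectation (qs_comparisons j m)
      (\<lambda>c. h (real j / real n * ((real c / real j - 1) + 1) - 1 / real n))"
    unfolding rescale ..
  also have "\<dots> = measure_pmf.expectation (qs_W j m) (\<lambda>w. h (real j / real n * (w + 1) - 1 / real n))"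
    unfolding qs_W_def by (rule integral_map_pmf[symmetric])
  finally show ?thesis .
qed

definition qs_W_dickman_error_le :: "real measure \<Rightarrow> nat \<Rightarrow> nat \<Rightarrow> bool" where
  "qs_W_dickman_error_le \<mu> n m \<longleftrightarrow>
     (\<forall>h L. L-lipschitz_on UNIV h \<longrightarrow>
        \<bar>measure_pmf.expectation (qs_W n m) h - (\<integral>x. h x \<partial>\<mu>)\<bar> \<le> L * qs_error_bound m n / real n)"

lemma qs_subproblem_error:
  fixes h :: "real \<Rightarrow> real"
  assumes D: "dickman_law \<mu>" and h: "L-lipschitz_on UNIV h" and n: "1 \<le> n" and j: "0 < j"
    and IH: "qs_W_dickman_error_le \<mu> j m"
  shows "\<bar>measure_pmf.expectation (map_pmf (\<lambda>c. n - 1 + c) (qs_comparisons j m)) (\<lambda>c. h (real c / real n - 1))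
      - dickman_avg \<mu> h (real j / real n)\<bar> \<le> L * (qs_error_bound m j + 1) / real n"
proof -
  define a where "a = real j / real n"
  define h' where "h' w = h (a * (w + 1) - 1 / real n)" for w
  have "(L * a)-lipschitz_on UNIV h'"
    using lipschitz_on_affine_precompose[OF h, of a "1 / real n"] unfolding h'_def a_def by simp
  with IH have "\<bar>measure_pmf.expectation (qs_W j m) h' - (\<integral>x. h' x \<partial>\<mu>)\<bar> \<le> L * qs_error_bound m j / real n"
    using j unfolding qs_W_dickman_error_le_def a_def by fastforce
  moreover have "\<bar>(\<integral>x. h' x \<partial>\<mu>) - dickman_avg \<mu> h a\<bar> \<le> L / real n"
    using dickman_avg_shift[OF D h, of a "1 / real n"] unfolding h'_def by simp
  moreover have "measure_pmf.expectation (map_pmf (\<lambda>c. n - 1 + c) (qs_comparisons j m)) (\<lambda>c. h (real c / real n - 1))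
      = measure_pmf.expectation (qs_W j m) h'"
    unfolding h'_def a_def by (rule expectation_shifted_qs_comparisons[OF n j])
  ultimately show ?thesis
    unfolding a_def[symmetric] by (simp add: add_divide_distrib distrib_left)
qed

lemma qs_pivot_answer_error:
  fixes h :: "real \<Rightarrow> real"
  assumes D: "dickman_law \<mu>" and h: "L-lipschitz_on UNIV h" and m: "1 \<le> m" and n: "1 \<le> n"
  shows "\<bar>measure_pmf.expectation (qs_given_pivot n m m) (\<lambda>c. h (real c / real n - 1))
      - dickman_avg \<mu> h (real (m - 1) / real n)\<bar> \<le> L * (2 * real m - 1) / real n"
proof -
  let ?g = "dickman_avg \<mu> h"
  \<comment> \<open>\<open>W = -1/n\<close> here; it is compared with \<open>g((m-1)/n)\<close> through \<open>g(0) = h(0)\<close>\<close>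
  have "measure_pmf.expectation (qs_given_pivot n m m) (\<lambda>c. h (real c / real n - 1)) = h (- (1 / real n))"
    using n by (simp add: qs_given_pivot_def of_nat_diff field_simps)
  moreover have "\<bar>h (- (1 / real n)) - ?g 0\<bar> \<le> L / real n"
    using lipschitz_on_UNIV_realD[OF h, of "- (1 / real n)" 0] n by (simp add: dickman_avg_0[OF D])
  moreover have "\<bar>?g 0 - ?g (real (m - 1) / real n)\<bar> \<le> 2 * L * (real (m - 1) / real n)"
    using lipschitz_on_UNIV_realD[OF dickman_avg_lipschitz[OF D h], of 0 "real (m - 1) / real n"] by simp
  ultimately have "\<bar>measure_pmf.expectation (qs_given_pivot n m m) (\<lambda>c. h (real c / real n - 1))
      - ?g (real (m - 1) / real n)\<bar> \<le> L / real n + 2 * L * (real (m - 1) / real n)"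
    by linarith
  also have "\<dots> = L * (2 * real m - 1) / real n"
    using m n by (simp add: of_nat_diff field_simps)
  finally show ?thesis .
qed

lemma dickman_avg_unit_interval_oscillation:
  fixes h :: "real \<Rightarrow> real"
  assumes D: "dickman_law \<mu>" and h: "L-lipschitz_on UNIV h"
    and "0 \<le> u" "u \<le> 1" "0 \<le> v" "v \<le> 1"
  shows "\<bar>dickman_avg \<mu> h u - dickman_avg \<mu> h v\<bar> \<le> 2 * L"
proof -
  have "2 * L * \<bar>u - v\<bar> \<le> 2 * L * 1"
    using assms lipschitz_on_nonneg[OF h] by (intro mult_left_mono) auto
  then show ?thesis
    using lipschitz_on_UNIV_realD[OF dickman_avg_lipschitz[OF D h], of u v] by simp
qed

lemma qs_pivot_error:
  fixes h :: "real \<Rightarrow> real"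
  assumes D: "dickman_law \<mu>" and h: "L-lipschitz_on UNIV h"
    and m: "1 \<le> m" and mn: "m \<le> n" and k: "k \<in> {1..n}"
    and IH: "\<And>j m'. j < n \<Longrightarrow> 1 \<le> m' \<Longrightarrow> m' \<le> j \<Longrightarrow> qs_W_dickman_error_le \<mu> j m'"
  shows "\<bar>measure_pmf.expectation (qs_given_pivot n m k) (\<lambda>c. h (real c / real n - 1))
      - dickman_avg \<mu> h (real (k - 1) / real n)\<bar> \<le> L * qs_pivot_error_bound n m k / real n"
proof -
  let ?E = "measure_pmf.expectation (qs_given_pivot n m k) (\<lambda>c. h (real c / real n - 1))"
  let ?g = "dickman_avg \<mu> h"
  have n: "1 \<le> n" "0 < real n" using m mn by auto
  consider "k = m" | "m < k" | "k < m" by linarith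
  then show ?thesis
  proof cases
    case 1
    then show ?thesis
      using qs_pivot_answer_error[OF D h m n(1)] by (simp add: qs_pivot_error_bound_def)
  next
    case 2
    then have pivot: "qs_given_pivot n m k = map_pmf (\<lambda>c. n - 1 + c) (qs_comparisons (k - 1) m)"
      by (simp add: qs_given_pivot_def)
    have "\<bar>?E - ?g (real (k - 1) / real n)\<bar> \<le> L * (qs_error_bound m (k - 1) + 1) / real n"
      unfolding pivot using 2 m k by (intro qs_subproblem_error[OF D h n(1)] IH) auto
    then show ?thesis
      using 2 by (simp add: qs_pivot_error_bound_def)
  next
    case 3
    then have pivot: "qs_given_pivot n m k = map_pmf (\<lambda>c. n - 1 + c) (qs_comparisons (n - k) (m - k))"
      by (simp add: qs_given_pivot_def)
    have "\<bar>?E - ?g (real (n - k) / real n)\<bar> \<le> L * (qs_error_bound (m - k) (n - k) + 1) / real n"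
      unfolding pivot using 3 mn k by (intro qs_subproblem_error[OF D h n(1)] IH) auto
    moreover have "\<bar>?g (real (n - k) / real n) - ?g (real (k - 1) / real n)\<bar> \<le> 2 * L"
      using k n by (intro dickman_avg_unit_interval_oscillation[OF D h]) (auto simp: divide_le_eq)
    ultimately have "\<bar>?E - ?g (real (k - 1) / real n)\<bar>
        \<le> L * (qs_error_bound (m - k) (n - k) + 1) / real n + 2 * L"
      by linarith
    also have "\<dots> = L * qs_pivot_error_bound n m k / real n"
      using 3 n unfolding qs_pivot_error_bound_def by (simp add: field_simps)
    finally show ?thesis .
  qed
qed

lemma qs_W_dickman_error_bound:
  assumes D: "dickman_law \<mu>"
  shows "1 \<le> m \<Longrightarrow> m \<le> n \<Longrightarrow> qs_W_dickman_error_le \<mu> n m"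
proof (induction n arbitrary: m rule: less_induct)
  case (less n m)
  have n: "1 \<le> n" "0 < real n" using less.prems by auto
  show ?case
    unfolding qs_W_dickman_error_le_def
  proof (intro allI impI)
    fix h :: "real \<Rightarrow> real" and L :: real
    assume h: "L-lipschitz_on UNIV h"
    let ?E = "\<lambda>k. measure_pmf.expectation (qs_given_pivot n m k) (\<lambda>c. h (real c / real n - 1))"
    let ?g = "\<lambda>k. dickman_avg \<mu> h (real (k - 1) / real n)"
    let ?F = "\<lambda>k. qs_pivot_error_bound n m k"
    have "\<bar>(\<Sum>k\<in>{1..n}. ?E k) / real n - (\<Sum>k\<in>{1..n}. ?g k) / real n\<bar>
        \<le> (\<Sum>k\<in>{1..n}. \<bar>?E k - ?g k\<bar>) / real n"
      using n by (simp add: sum_subtractf[symmetric] diff_divide_distrib[symmetric] divide_right_mono sum_abs)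
    also have "\<dots> \<le> (\<Sum>k\<in>{1..n}. L * ?F k / real n) / real n"
      using n less.prems less.IH by (intro divide_right_mono sum_mono qs_pivot_error[OF D h]) auto
    finally have pivots: "\<bar>(\<Sum>k\<in>{1..n}. ?E k) / real n - (\<Sum>k\<in>{1..n}. ?g k) / real n\<bar>
        \<le> L * (\<Sum>k\<in>{1..n}. ?F k) / (real n * real n)"
      by (simp add: sum_divide_distrib[symmetric] sum_distrib_left[symmetric])
    have "\<bar>integral {0..1} (dickman_avg \<mu> h) - (\<Sum>k\<in>{1..n}. ?g k) / real n\<bar> \<le> 2 * L / real n"
      by (rule lipschitz_riemann_sum_error[OF dickman_avg_lipschitz[OF D h] n(1)])
    with pivots have "\<bar>measure_pmf.expectation (qs_W n m) h - (\<integral>x. h x \<partial>\<mu>)\<bar>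
        \<le> L * (\<Sum>k\<in>{1..n}. ?F k) / (real n * real n) + 2 * L / real n"
      unfolding expectation_qs_W_pivot_average[OF n(1)] dickman_integral_eq_avg_integral[OF D h]
      by linarith
    also have "\<dots> = L * ((\<Sum>k\<in>{1..n}. ?F k) + 2 * real n) / (real n * real n)"
      using n by (simp add: field_simps)
    also have "\<dots> \<le> L * (real n * qs_error_bound m n) / (real n * real n)"
      using sum_qs_pivot_error_bound_le[OF less.prems] lipschitz_on_nonneg[OF h]
      by (intro divide_right_mono mult_left_mono) auto
    also have "\<dots> = L * qs_error_bound m n / real n"
      using n by simp
    finally show "\<bar>measure_pmf.expectation (qs_W n m) h - (\<integral>x. h x \<partial>\<mu>)\<bar> \<le> L * qs_error_bound m n / real n" .
  qed
qed

theorem theorem1p2: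
  fixes m n :: nat and \<mu> :: "real measure"
  assumes "m \<ge> 2" and "n \<ge> m" and "dickman_law \<mu>"
  shows "wasserstein1 (measure_pmf (map_pmf (\<lambda>c. real c / real n - 1) (qs_comparisons n m))) \<mu>
           \<le> ereal (((46 * real m + 8) * ln (real n / real m) + 54 * real m + 8) / real n)"
  unfolding wasserstein1_def qs_W_def[symmetric]
proof (rule SUP_least)
  fix h :: "real \<Rightarrow> real"
  assume "h \<in> {h. 1-lipschitz_on UNIV h}"
  moreover have "qs_W_dickman_error_le \<mu> n m"
    using assms by (intro qs_W_dickman_error_bound) auto
  ultimately have "\<bar>measure_pmf.expectation (qs_W n m) h - (\<integral>x. h x \<partial>\<mu>)\<bar> \<le> qs_error_bound m n / real n"
    unfolding qs_W_dickman_error_le_def by fastforce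
  then show "ereal \<bar>measure_pmf.expectation (qs_W n m) h - (\<integral>x. h x \<partial>\<mu>)\<bar>
      \<le> ereal (((46 * real m + 8) * ln (real n / real m) + 54 * real m + 8) / real n)"
    by (simp add: qs_error_bound_def)
qed

end
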